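(* Let $\mathbb F$ be an algebraically closed field of characteristic not two. Every finite-dimensional associative algebra $R$ (without identity) over $\mathbb F$ with $R^3=0$ and $\dim R^2=2$ is isomorphic to exactly one algebra on $\mathbb F^{2+n}$, for some $n\ge 2$, with multiplication \[ uv=\left(u^T\begin{bmatrix}0_2&0\\0&A\end{bmatrix}v,\ u^T\begin{bmatrix}0_2&0\\0&B\end{bmatrix}v,\ 0,\dots,0\right)^T \] given by $n$-by-$n$ matrices $A$ and $B$ that are linearly independent (i.e. $aA+bB=0$ implies $a=b=0$). The pair $(A,B)$ is determined by $R$ uniquely up to congruence $(A,B)\mapsto(S^TAS,S^TBS)$ ($S$ nonsingular) and linear substitutions $(A,B)\mapsto(r_{11}A+r_{12}B,\ r_{21}A+r_{22}B)$ with $[r_{ij}]$ nonsingular.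
   Context: An algebra without identity is a finite-dimensional vector space $R$ over $\mathbb F$ with a bilinear associative multiplication; $R^2$ (resp. $R^3$) is the subspace spanned by all products $uv$ (resp. $uvw$). Here $0_2$ is the $2\times 2$ zero matrix and vectors of $\mathbb F^{2+n}$ are columns. *)

theory Defs
  imports "Jordan_Normal_Form.Determinant" "HOL-Computational_Algebra.Polynomial"
begin

definition alg_closed :: "'a::field itself \<Rightarrow> bool" where
  "alg_closed _ \<longleftrightarrow> (\<forall>p :: 'a poly. degree p \<ge> 1 \<longrightarrow> (\<exists>x. poly p x = 0))"

definition fd_algebra :: "('a::field \<Rightarrow> 'r::ab_group_add \<Rightarrow> 'r) \<Rightarrow> ('r \<Rightarrow> 'r \<Rightarrow> 'r) \<Rightarrow> bool" where
  "fd_algebra sc mul \<longleftrightarrow>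
     (\<exists>B. finite_dimensional_vector_space sc B) \<and>
     (\<forall>x y z. mul (x + y) z = mul x z + mul y z) \<and>
     (\<forall>x y z. mul x (y + z) = mul x y + mul x z) \<and>
     (\<forall>c x y. mul (sc c x) y = sc c (mul x y)) \<and>
     (\<forall>c x y. mul x (sc c y) = sc c (mul x y)) \<and>
     (\<forall>x y z. mul (mul x y) z = mul x (mul y z))"

definition alg_sq :: "('a::field \<Rightarrow> 'r::ab_group_add \<Rightarrow> 'r) \<Rightarrow> ('r \<Rightarrow> 'r \<Rightarrow> 'r) \<Rightarrow> 'r set" where
  "alg_sq sc mul = module.span sc {mul u v | u v. True}"

definition alg_cube :: "('a::field \<Rightarrow> 'r::ab_group_add \<Rightarrow> 'r) \<Rightarrow> ('r \<Rightarrow> 'r \<Rightarrow> 'r) \<Rightarrow> 'r set" where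
  "alg_cube sc mul = module.span sc {mul (mul u v) w | u v w. True}"

definition blk :: "nat \<Rightarrow> 'a::zero mat \<Rightarrow> 'a mat" where
  "blk n A = four_block_mat (0\<^sub>m 2 2) (0\<^sub>m 2 n) (0\<^sub>m n 2) A"

definition mult_AB :: "nat \<Rightarrow> 'a::comm_ring_1 mat \<Rightarrow> 'a mat \<Rightarrow> 'a vec \<Rightarrow> 'a vec \<Rightarrow> 'a vec" where
  "mult_AB n A B u v = vec (2 + n) (\<lambda>i. if i = 0 then u \<bullet> (blk n A *\<^sub>v v)
                                      else if i = 1 then u \<bullet> (blk n B *\<^sub>v v) else 0)"

definition alg_iso_to :: "('a::field \<Rightarrow> 'r::ab_group_add \<Rightarrow> 'r) \<Rightarrow> ('r \<Rightarrow> 'r \<Rightarrow> 'r) \<Rightarrow> nat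
     \<Rightarrow> ('a vec \<Rightarrow> 'a vec \<Rightarrow> 'a vec) \<Rightarrow> bool" where
  "alg_iso_to sc mul m m_mul \<longleftrightarrow>
     (\<exists>\<phi>. bij_betw \<phi> UNIV (carrier_vec m) \<and>
          (\<forall>x y. \<phi> (x + y) = \<phi> x + \<phi> y) \<and>
          (\<forall>c x. \<phi> (sc c x) = c \<cdot>\<^sub>v \<phi> x) \<and>
          (\<forall>x y. \<phi> (mul x y) = m_mul (\<phi> x) (\<phi> y)))"

definition lin_indep_pair :: "nat \<Rightarrow> 'a::field mat \<Rightarrow> 'a mat \<Rightarrow> bool" where
  "lin_indep_pair n A B \<longleftrightarrow>
     (\<forall>a b. a \<cdot>\<^sub>m A + b \<cdot>\<^sub>m B = 0\<^sub>m n n \<longrightarrow> a = 0 \<and> b = 0)"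

definition pair_equiv :: "nat \<Rightarrow> 'a::field mat \<Rightarrow> 'a mat \<Rightarrow> 'a mat \<Rightarrow> 'a mat \<Rightarrow> bool" where
  "pair_equiv n A B A' B' \<longleftrightarrow>
     (\<exists>S r. S \<in> carrier_mat n n \<and> invertible_mat S \<and>
            r \<in> carrier_mat 2 2 \<and> invertible_mat r \<and>
            A' = r $$ (0,0) \<cdot>\<^sub>m (transpose_mat S * A * S) + r $$ (0,1) \<cdot>\<^sub>m (transpose_mat S * B * S) \<and>
            B' = r $$ (1,0) \<cdot>\<^sub>m (transpose_mat S * A * S) + r $$ (1,1) \<cdot>\<^sub>m (transpose_mat S * B * S))"

end

theory Submission
  imports Defs
begin

text \<open>
  Since \<open>R\<^sup>3 = 0\<close>, the square \<open>R\<^sup>2\<close> annihilates \<open>R\<close> from both sides. Choosing coordinates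
  \<open>F\<^sup>2 \<oplus> F\<^sup>n\<close> whose first block is \<open>R\<^sup>2\<close>, a product therefore depends only on the last \<open>n\<close>
  coordinates of its factors and lies in the first block; its two entries are bilinear forms with
  matrices \<open>A\<close> and \<open>B\<close>, which are linearly independent because the products span \<open>R\<^sup>2\<close>.
  For uniqueness, an isomorphism between two such models preserves the span \<open>F\<^sup>2 \<oplus> 0\<close> of the
  products, so its matrix is block upper triangular with diagonal blocks \<open>r\<close> and \<open>T\<close>, and comparing
  products gives \<open>T\<^sup>T A' T = r\<^sub>1\<^sub>1 A + r\<^sub>1\<^sub>2 B\<close> and \<open>T\<^sup>T B' T = r\<^sub>2\<^sub>1 A + r\<^sub>2\<^sub>2 B\<close>, while block
  diagonal matrices realise every such change of the pair.
\<close>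

section \<open>Bilinear forms and block matrices\<close>

(* Keep \<open>2 + n\<close> from being unfolded to \<open>Suc (Suc n)\<close>. *)
declare add_2_eq_Suc [simp del] add_2_eq_Suc' [simp del]

lemma scalar_prod_mult_mat_vec_sum:
  fixes M :: "'a::comm_semiring_0 mat"
  assumes "M \<in> carrier_mat n n" "x \<in> carrier_vec n" "y \<in> carrier_vec n"
  shows "x \<bullet> (M *\<^sub>v y) = (\<Sum>i<n. \<Sum>j<n. x $ i * M $$ (i,j) * y $ j)"
  using assms by (auto simp: scalar_prod_def atLeast0LessThan sum_distrib_left mult.assoc intro!: sum.cong)

lemma mat_eq_by_bilinear_form:
  fixes M N :: "'a::comm_ring_1 mat"
  assumes "M \<in> carrier_mat n n" "N \<in> carrier_mat n n"
    and "\<And>x y. x \<in> carrier_vec n \<Longrightarrow> y \<in> carrier_vec n \<Longrightarrow> x \<bullet> (M *\<^sub>v y) = x \<bullet> (N *\<^sub>v y)"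
  shows "M = N"
proof (rule eq_matI)
  fix i j assume "i < dim_row N" "j < dim_col N"
  then show "M $$ (i,j) = N $$ (i,j)"
    using assms(3)[of "unit_vec n i" "unit_vec n j"] assms(1,2) by simp
qed (use assms in auto)

lemma mat_eq_by_mult_mat_vec:
  fixes M N :: "'a::comm_ring_1 mat"
  assumes "M \<in> carrier_mat n n" "N \<in> carrier_mat n n"
    and "\<And>y. y \<in> carrier_vec n \<Longrightarrow> M *\<^sub>v y = N *\<^sub>v y"
  shows "M = N"
  using assms by (intro mat_eq_by_bilinear_form) auto

lemma bilinear_form_congruence:
  fixes S M :: "'a::comm_semiring_0 mat"
  assumes "S \<in> carrier_mat n n" "M \<in> carrier_mat n n" "x \<in> carrier_vec n" "y \<in> carrier_vec n"
  shows "(S *\<^sub>v x) \<bullet> (M *\<^sub>v (S *\<^sub>v y)) = x \<bullet> ((transpose_mat S * M * S) *\<^sub>v y)"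
  using assms by (simp add: assoc_mult_mat_vec[of _ n n _ n] transpose_vec_mult_scalar[symmetric])

lemma bilinear_form_lincomb:
  fixes A B :: "'a::comm_ring_1 mat"
  assumes "A \<in> carrier_mat n n" "B \<in> carrier_mat n n" "x \<in> carrier_vec n" "y \<in> carrier_vec n"
  shows "x \<bullet> ((a \<cdot>\<^sub>m A + b \<cdot>\<^sub>m B) *\<^sub>v y) = a * (x \<bullet> (A *\<^sub>v y)) + b * (x \<bullet> (B *\<^sub>v y))"
  using assms by (simp add: scalar_prod_mult_mat_vec_sum[of _ n] sum_distrib_left sum.distrib[symmetric])
    (auto simp: algebra_simps intro!: sum.cong)

lemma congruence_lincomb_cancel:
  fixes S :: "'a::comm_ring_1 mat"
  assumes S: "S \<in> carrier_mat n n" and S': "S' \<in> carrier_mat n n" and SS': "S * S' = 1\<^sub>m n"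
    and A: "A \<in> carrier_mat n n" and B: "B \<in> carrier_mat n n"
  shows "transpose_mat S' * (a \<cdot>\<^sub>m (transpose_mat S * A * S) + b \<cdot>\<^sub>m (transpose_mat S * B * S)) * S'
       = a \<cdot>\<^sub>m A + b \<cdot>\<^sub>m B"
proof (rule mat_eq_by_bilinear_form)
  fix x y :: "'a vec" assume xy: "x \<in> carrier_vec n" "y \<in> carrier_vec n"
  have cancel: "S *\<^sub>v (S' *\<^sub>v z) = z" if "z \<in> carrier_vec n" for z
    using that S S' SS' by (simp add: assoc_mult_mat_vec[symmetric, of S n n S' n])
  have congr: "(S' *\<^sub>v x) \<bullet> ((transpose_mat S * M * S) *\<^sub>v (S' *\<^sub>v y)) = x \<bullet> (M *\<^sub>v y)"
    if "M \<in> carrier_mat n n" for M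
    using bilinear_form_congruence[OF S that, of "S' *\<^sub>v x" "S' *\<^sub>v y"] S' xy by (simp add: cancel)
  show "x \<bullet> ((transpose_mat S' * (a \<cdot>\<^sub>m (transpose_mat S * A * S) + b \<cdot>\<^sub>m (transpose_mat S * B * S)) * S') *\<^sub>v y)
      = x \<bullet> ((a \<cdot>\<^sub>m A + b \<cdot>\<^sub>m B) *\<^sub>v y)"
  proof -
    have "x \<bullet> ((transpose_mat S' * (a \<cdot>\<^sub>m (transpose_mat S * A * S) + b \<cdot>\<^sub>m (transpose_mat S * B * S)) * S') *\<^sub>v y)
        = (S' *\<^sub>v x) \<bullet> ((a \<cdot>\<^sub>m (transpose_mat S * A * S) + b \<cdot>\<^sub>m (transpose_mat S * B * S)) *\<^sub>v (S' *\<^sub>v y))"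
      using S S' A B xy by (intro bilinear_form_congruence[symmetric]) auto
    also have "\<dots> = a * ((S' *\<^sub>v x) \<bullet> ((transpose_mat S * A * S) *\<^sub>v (S' *\<^sub>v y)))
        + b * ((S' *\<^sub>v x) \<bullet> ((transpose_mat S * B * S) *\<^sub>v (S' *\<^sub>v y)))"
      using S S' A B xy by (intro bilinear_form_lincomb) auto
    also have "\<dots> = x \<bullet> ((a \<cdot>\<^sub>m A + b \<cdot>\<^sub>m B) *\<^sub>v y)"
      by (simp only: congr[OF A] congr[OF B] bilinear_form_lincomb[OF A B xy])
    finally show ?thesis .
  qed
qed (use S S' A B in auto)

lemma smult_mat_lincomb_assoc:
  fixes A B :: "'a::comm_ring mat"
  assumes "A \<in> carrier_mat n n" "B \<in> carrier_mat n n"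
  shows "a \<cdot>\<^sub>m (c \<cdot>\<^sub>m A + d \<cdot>\<^sub>m B) + b \<cdot>\<^sub>m (e \<cdot>\<^sub>m A + f \<cdot>\<^sub>m B)
       = (a * c + b * e) \<cdot>\<^sub>m A + (a * d + b * f) \<cdot>\<^sub>m B"
  using assms by (intro eq_matI) (auto simp: algebra_simps)

lemma mult_mat_vec_index_2:
  assumes "R \<in> carrier_mat 2 2" "w \<in> carrier_vec 2" "a < 2"
  shows "(R *\<^sub>v w) $ a = R $$ (a,0) * w $ 0 + R $$ (a,1) * w $ 1"
  using assms by (auto simp: scalar_prod_def numeral_2_eq_2)

lemma mult_mat_index_2:
  assumes "R \<in> carrier_mat 2 2" "R' \<in> carrier_mat 2 2" "a < 2" "c < 2"
  shows "(R * R') $$ (a,c) = R $$ (a,0) * R' $$ (0,c) + R $$ (a,1) * R' $$ (1,c)"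
  using assms by (simp add: scalar_prod_def numeral_2_eq_2 atLeast0LessThan)

lemma four_block_mat_eq_one_mat:
  assumes "A \<in> carrier_mat n1 n1" "B \<in> carrier_mat n1 n2" "C \<in> carrier_mat n2 n1" "D \<in> carrier_mat n2 n2"
    and one: "four_block_mat A B C D = 1\<^sub>m (n1 + n2)"
  shows "A = 1\<^sub>m n1" "D = 1\<^sub>m n2"
proof (rule eq_matI)
  fix i j assume "i < dim_row (1\<^sub>m n1 :: 'a mat)" "j < dim_col (1\<^sub>m n1 :: 'a mat)"
  then show "A $$ (i,j) = 1\<^sub>m n1 $$ (i,j)"
    using arg_cong[OF one, of "\<lambda>M. M $$ (i,j)"] assms(1-4) by simp
next
  show "D = 1\<^sub>m n2"
  proof (rule eq_matI)
    fix i j assume "i < dim_row (1\<^sub>m n2 :: 'a mat)" "j < dim_col (1\<^sub>m n2 :: 'a mat)"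
    then show "D $$ (i,j) = 1\<^sub>m n2 $$ (i,j)"
      using arg_cong[OF one, of "\<lambda>M. M $$ (n1 + i, n1 + j)"] assms(1-4) by simp
  qed (use assms in auto)
qed (use assms in auto)

lemma block_triangular_mult_append:
  assumes "r \<in> carrier_mat 2 2" "X \<in> carrier_mat 2 n" "T \<in> carrier_mat n n"
    "z \<in> carrier_vec 2" "x \<in> carrier_vec n"
  shows "four_block_mat r X (0\<^sub>m n 2) T *\<^sub>v (z @\<^sub>v x) = (r *\<^sub>v z + X *\<^sub>v x) @\<^sub>v (T *\<^sub>v x)"
proof -
  have "0\<^sub>m n 2 *\<^sub>v z = 0\<^sub>v n" using assms(4) by (intro eq_vecI) auto
  then show ?thesis
    using assms by (simp add: four_block_mat_mult_vec[OF assms(1,2) zero_carrier_mat assms(3)])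
qed

lemma block_triangular_inverse_diagonal:
  fixes r :: "'a::field mat"
  assumes "r \<in> carrier_mat 2 2" "X \<in> carrier_mat 2 n" "T \<in> carrier_mat n n"
    "r' \<in> carrier_mat 2 2" "X' \<in> carrier_mat 2 n" "T' \<in> carrier_mat n n"
    and "four_block_mat r X (0\<^sub>m n 2) T * four_block_mat r' X' (0\<^sub>m n 2) T' = 1\<^sub>m (2+n)"
  shows "r * r' = 1\<^sub>m 2" "T * T' = 1\<^sub>m n"
proof -
  have "four_block_mat (r * r') (r * X' + X * T') (0\<^sub>m n 2) (T * T') = 1\<^sub>m (2+n)"
    using assms by (simp add: mult_four_block_mat[of _ 2 2 _ n _ n])
  then show "r * r' = 1\<^sub>m 2" "T * T' = 1\<^sub>m n"
    using four_block_mat_eq_one_mat[OF mult_carrier_mat[OF assms(1,4)] _ zero_carrier_mat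
        mult_carrier_mat[OF assms(3,6)]] add_carrier_mat[OF mult_carrier_mat[OF assms(2,6)]]
    by auto
qed

lemma invertible_mat_of_inverse:
  assumes "A \<in> carrier_mat n n" "B \<in> carrier_mat n n" "A * B = 1\<^sub>m n" "B * A = 1\<^sub>m n"
  shows "invertible_mat A"
  using assms unfolding invertible_mat_def inverts_mat_def by auto

lemma invertible_mat_obtain_inverse:
  fixes S :: "'a::comm_ring_1 mat"
  assumes "invertible_mat S" "S \<in> carrier_mat n n"
  obtains S' where "S' \<in> carrier_mat n n" "S * S' = 1\<^sub>m n" "S' * S = 1\<^sub>m n"
proof -
  from assms obtain S' where S': "S * S' = 1\<^sub>m (dim_row S)" "S' * S = 1\<^sub>m (dim_row S')"
    unfolding invertible_mat_def inverts_mat_def by blast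
  have "S' \<in> carrier_mat n n"
    using arg_cong[OF S'(1), of dim_col] arg_cong[OF S'(2), of dim_col] assms(2) by auto
  with S' assms(2) show thesis using that by auto
qed

lemma vec_last_append: "w \<in> carrier_vec m \<Longrightarrow> vec_last (v @\<^sub>v w) m = w"
  by (intro eq_vecI) (auto simp: vec_last_def)

lemma vec_last_unit_vec: "t < n \<Longrightarrow> vec_last (unit_vec (2+n) (2+t)) n = unit_vec n t"
  by (intro eq_vecI) (auto simp: vec_last_def)

lemma exists_solution_2x2:
  fixes a b c d p q :: "'a::field"
  assumes "a * d - b * c \<noteq> 0"
  shows "\<exists>\<alpha> \<beta>. \<alpha> * a + \<beta> * c = p \<and> \<alpha> * b + \<beta> * d = q"
proof -
  define \<delta> where "\<delta> = a * d - b * c"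
  have "(p * d - q * c) / \<delta> * a + (q * a - p * b) / \<delta> * c = p * \<delta> / \<delta>"
    "(p * d - q * c) / \<delta> * b + (q * a - p * b) / \<delta> * d = q * \<delta> / \<delta>"
    by (simp_all only: times_divide_eq_left add_divide_distrib[symmetric])
      (simp_all add: \<delta>_def algebra_simps)
  then show ?thesis using assms by (metis \<delta>_def nonzero_mult_div_cancel_right)
qed

lemma sum_lessThan_2_plus: "(\<Sum>i<2+(n::nat). f i) = f 0 + f 1 + (\<Sum>i<n. f (2+i))"
proof -
  have "(\<Sum>i<Suc (Suc n). f i) = f 0 + f 1 + (\<Sum>i<n. f (Suc (Suc i)))"
    by (simp only: sum.lessThan_Suc_shift add.assoc) simp
  then show ?thesis by (simp add: numeral_2_eq_2)
qed

section \<open>The model algebras\<close>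

lemma lin_indep_pair_nonsingular_minor:
  assumes "A \<in> carrier_mat n n" "B \<in> carrier_mat n n" "lin_indep_pair n A B"
  obtains i j k l where "i < n" "j < n" "k < n" "l < n" "A $$ (i,j) * B $$ (k,l) - B $$ (i,j) * A $$ (k,l) \<noteq> 0"
proof -
  have "\<exists>k l. k < n \<and> l < n \<and> (A $$ (k,l) \<noteq> 0 \<or> B $$ (k,l) \<noteq> 0)"
  proof (rule ccontr)
    assume "\<not> ?thesis"
    then have "1 \<cdot>\<^sub>m A + 0 \<cdot>\<^sub>m B = 0\<^sub>m n n" using assms by (intro eq_matI) auto
    then show False using assms(3) unfolding lin_indep_pair_def by fastforce
  qed
  then obtain k l where kl: "k < n" "l < n" "A $$ (k,l) \<noteq> 0 \<or> B $$ (k,l) \<noteq> 0"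
    by blast
  have "\<exists>i j. i < n \<and> j < n \<and> A $$ (i,j) * B $$ (k,l) - B $$ (i,j) * A $$ (k,l) \<noteq> 0"
  proof (rule ccontr)
    assume "\<not> ?thesis"
    then have "B $$ (k,l) \<cdot>\<^sub>m A + (- A $$ (k,l)) \<cdot>\<^sub>m B = 0\<^sub>m n n"
      using assms by (intro eq_matI) (auto simp: algebra_simps)
    then show False using assms(3) kl unfolding lin_indep_pair_def by fastforce
  qed
  then show thesis using that kl by blast
qed

lemma lin_indep_pair_dim_ge_2:
  assumes "A \<in> carrier_mat n n" "B \<in> carrier_mat n n" "lin_indep_pair n A B"
  shows "n \<ge> 2"
proof (rule ccontr)
  assume "\<not> n \<ge> 2"
  then have "\<forall>i<n. i = 0" by auto
  with lin_indep_pair_nonsingular_minor[OF assms] show False by (metis mult.commute diff_self)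
qed

lemma blk_bilinear_form:
  assumes "u \<in> carrier_vec (2+n)" "v \<in> carrier_vec (2+n)" "A \<in> carrier_mat n n"
  shows "u \<bullet> (blk n A *\<^sub>v v) = vec_last u n \<bullet> (A *\<^sub>v vec_last v n)"
proof -
  have "blk n A *\<^sub>v v = blk n A *\<^sub>v (vec_first v 2 @\<^sub>v vec_last v n)"
    using assms(2) by simp
  also have "\<dots> = (0\<^sub>m 2 2 *\<^sub>v vec_first v 2) @\<^sub>v (A *\<^sub>v vec_last v n)"
    unfolding blk_def by (rule mult_mat_vec_split) (use assms in auto)
  also have "0\<^sub>m 2 2 *\<^sub>v vec_first v 2 = 0\<^sub>v 2" by (intro eq_vecI) auto
  finally have "u \<bullet> (blk n A *\<^sub>v v) = (vec_first u 2 @\<^sub>v vec_last u n) \<bullet> (0\<^sub>v 2 @\<^sub>v (A *\<^sub>v vec_last v n))"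
    using assms(1) by simp
  also have "\<dots> = vec_last u n \<bullet> (A *\<^sub>v vec_last v n)"
    using assms(3) by (subst scalar_prod_append[of _ 2 _ n]) auto
  finally show ?thesis .
qed

lemma mult_AB_index:
  assumes "u \<in> carrier_vec (2+n)" "v \<in> carrier_vec (2+n)" "A \<in> carrier_mat n n" "B \<in> carrier_mat n n"
  shows "mult_AB n A B u v $ 0 = vec_last u n \<bullet> (A *\<^sub>v vec_last v n)"
    and "mult_AB n A B u v $ 1 = vec_last u n \<bullet> (B *\<^sub>v vec_last v n)"
  using assms by (simp_all add: mult_AB_def blk_bilinear_form)

lemma mult_AB_index_ge_2: "2 \<le> k \<Longrightarrow> k < 2+n \<Longrightarrow> mult_AB n A B u v $ k = 0"
  by (simp add: mult_AB_def)

lemma mult_AB_carrier[simp]: "mult_AB n A B u v \<in> carrier_vec (2+n)"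
  and dim_mult_AB[simp]: "dim_vec (mult_AB n A B u v) = 2+n"
  by (simp_all add: mult_AB_def)

lemma mult_AB_eq_append: "mult_AB n A B u v = vec_first (mult_AB n A B u v) 2 @\<^sub>v 0\<^sub>v n"
  by (intro eq_vecI) (auto simp: vec_first_def mult_AB_index_ge_2)

lemma mult_AB_unit_vec:
  assumes "A \<in> carrier_mat n n" "B \<in> carrier_mat n n" "i < n" "j < n"
  shows "mult_AB n A B (unit_vec (2+n) (2+i)) (unit_vec (2+n) (2+j)) $ 0 = A $$ (i,j)"
    and "mult_AB n A B (unit_vec (2+n) (2+i)) (unit_vec (2+n) (2+j)) $ 1 = B $$ (i,j)"
  using mult_AB_index[OF unit_vec_carrier unit_vec_carrier assms(1,2)] assms
  by (simp_all add: vec_last_unit_vec)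

lemma mult_AB_products_span:
  assumes "A \<in> carrier_mat n n" "B \<in> carrier_mat n n" "lin_indep_pair n A B" "z \<in> carrier_vec 2"
  shows "\<exists>\<alpha> \<beta> u v u' v'. u \<in> carrier_vec (2+n) \<and> v \<in> carrier_vec (2+n) \<and>
           u' \<in> carrier_vec (2+n) \<and> v' \<in> carrier_vec (2+n) \<and>
           z @\<^sub>v 0\<^sub>v n = \<alpha> \<cdot>\<^sub>v mult_AB n A B u v + \<beta> \<cdot>\<^sub>v mult_AB n A B u' v'"
proof -
  obtain i j k l where ijkl: "i < n" "j < n" "k < n" "l < n"
    and minor: "A $$ (i,j) * B $$ (k,l) - B $$ (i,j) * A $$ (k,l) \<noteq> 0"
    using lin_indep_pair_nonsingular_minor[OF assms(1-3)] .
  define e :: "nat \<Rightarrow> 'a vec" where "e t = unit_vec (2+n) (2+t)" for t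
  obtain \<alpha> \<beta> where \<alpha>\<beta>: "\<alpha> * A $$ (i,j) + \<beta> * A $$ (k,l) = z $ 0" "\<alpha> * B $$ (i,j) + \<beta> * B $$ (k,l) = z $ 1"
    using exists_solution_2x2[OF minor] by blast
  have "z @\<^sub>v 0\<^sub>v n = \<alpha> \<cdot>\<^sub>v mult_AB n A B (e i) (e j) + \<beta> \<cdot>\<^sub>v mult_AB n A B (e k) (e l)"
  proof (rule eq_vecI)
    fix t assume "t < dim_vec (\<alpha> \<cdot>\<^sub>v mult_AB n A B (e i) (e j) + \<beta> \<cdot>\<^sub>v mult_AB n A B (e k) (e l))"
    then have "t = 0 \<or> t = 1 \<or> 2 \<le> t \<and> t < 2+n" by auto
    then show "(z @\<^sub>v 0\<^sub>v n) $ t = (\<alpha> \<cdot>\<^sub>v mult_AB n A B (e i) (e j) + \<beta> \<cdot>\<^sub>v mult_AB n A B (e k) (e l)) $ t"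
      using assms(4) \<alpha>\<beta> mult_AB_unit_vec[OF assms(1,2) ijkl(1,2)] mult_AB_unit_vec[OF assms(1,2) ijkl(3,4)]
      by (auto simp: e_def mult_AB_index_ge_2)
  qed (use assms(4) in simp)
  then show ?thesis by (metis unit_vec_carrier e_def)
qed

section \<open>Isomorphisms between model algebras\<close>

definition mult_hom_mat ::
    "nat \<Rightarrow> ('a::semiring_0 vec \<Rightarrow> 'a vec \<Rightarrow> 'a vec) \<Rightarrow> ('a vec \<Rightarrow> 'a vec \<Rightarrow> 'a vec) \<Rightarrow> 'a mat \<Rightarrow> bool"
  where
  "mult_hom_mat m M M' P \<longleftrightarrow> P \<in> carrier_mat m m \<and>
     (\<forall>u \<in> carrier_vec m. \<forall>v \<in> carrier_vec m. P *\<^sub>v M u v = M' (P *\<^sub>v u) (P *\<^sub>v v))"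

lemma mult_hom_mat_mult_AB_lower_left_zero:
  fixes P :: "'a::field mat"
  assumes hom: "mult_hom_mat (2+n) (mult_AB n A B) (mult_AB n A' B') P"
    and "A \<in> carrier_mat n n" "B \<in> carrier_mat n n" "lin_indep_pair n A B" "a < 2" "i < n"
  shows "P $$ (2+i, a) = 0"
proof -
  have P: "P \<in> carrier_mat (2+n) (2+n)"
    and mult: "\<And>u v. u \<in> carrier_vec (2+n) \<Longrightarrow> v \<in> carrier_vec (2+n) \<Longrightarrow>
                 P *\<^sub>v mult_AB n A B u v = mult_AB n A' B' (P *\<^sub>v u) (P *\<^sub>v v)"
    using hom unfolding mult_hom_mat_def by auto
  \<comment> \<open>The products span \<open>F\<^sup>2 \<oplus> 0\<close>, and \<open>P\<close> maps products to products, whose last \<open>n\<close> entries vanish.\<close>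
  obtain \<alpha> \<beta> u v u' v' where uv: "u \<in> carrier_vec (2+n)" "v \<in> carrier_vec (2+n)"
      "u' \<in> carrier_vec (2+n)" "v' \<in> carrier_vec (2+n)"
    and span: "unit_vec 2 a @\<^sub>v 0\<^sub>v n = \<alpha> \<cdot>\<^sub>v mult_AB n A B u v + \<beta> \<cdot>\<^sub>v mult_AB n A B u' v'"
    using mult_AB_products_span[OF assms(2-4) unit_vec_carrier] by blast
  have "unit_vec (2+n) a = (unit_vec 2 a @\<^sub>v 0\<^sub>v n :: 'a vec)" using assms(5) by (intro eq_vecI) auto
  with span have "P *\<^sub>v unit_vec (2+n) a = P *\<^sub>v (\<alpha> \<cdot>\<^sub>v mult_AB n A B u v + \<beta> \<cdot>\<^sub>v mult_AB n A B u' v')"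
    by simp
  also have "\<dots> = \<alpha> \<cdot>\<^sub>v (P *\<^sub>v mult_AB n A B u v) + \<beta> \<cdot>\<^sub>v (P *\<^sub>v mult_AB n A B u' v')"
    by (simp add: mult_add_distrib_mat_vec[OF P] mult_mat_vec[OF P])
  also have "\<dots> = \<alpha> \<cdot>\<^sub>v mult_AB n A' B' (P *\<^sub>v u) (P *\<^sub>v v)
      + \<beta> \<cdot>\<^sub>v mult_AB n A' B' (P *\<^sub>v u') (P *\<^sub>v v')"
    by (simp add: mult uv)
  finally have "(P *\<^sub>v unit_vec (2+n) a) $ (2+i) = 0"
    using P assms(6) by (simp add: mult_AB_index_ge_2)
  then show ?thesis
    using P assms(5,6) by simp
qed

lemma mult_hom_mat_mult_AB_block_triangular:
  fixes P :: "'a::field mat"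
  assumes hom: "mult_hom_mat (2+n) (mult_AB n A B) (mult_AB n A' B') P"
    and "A \<in> carrier_mat n n" "B \<in> carrier_mat n n" "lin_indep_pair n A B"
  obtains r X T where "r \<in> carrier_mat 2 2" "X \<in> carrier_mat 2 n" "T \<in> carrier_mat n n"
    "P = four_block_mat r X (0\<^sub>m n 2) T"
proof
  have P: "P \<in> carrier_mat (2+n) (2+n)" using hom unfolding mult_hom_mat_def by auto
  show "mat 2 2 (\<lambda>(i,j). P $$ (i,j)) \<in> carrier_mat 2 2" "mat 2 n (\<lambda>(i,j). P $$ (i,2+j)) \<in> carrier_mat 2 n"
    "mat n n (\<lambda>(i,j). P $$ (2+i,2+j)) \<in> carrier_mat n n"
    by simp_all
  show "P = four_block_mat (mat 2 2 (\<lambda>(i,j). P $$ (i,j))) (mat 2 n (\<lambda>(i,j). P $$ (i,2+j)))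
      (0\<^sub>m n 2) (mat n n (\<lambda>(i,j). P $$ (2+i,2+j)))"
  proof (rule eq_matI)
    fix i j assume "i < dim_row (four_block_mat (mat 2 2 (\<lambda>(i,j). P $$ (i,j))) (mat 2 n (\<lambda>(i,j). P $$ (i,2+j)))
      (0\<^sub>m n 2) (mat n n (\<lambda>(i,j). P $$ (2+i,2+j))))"
      "j < dim_col (four_block_mat (mat 2 2 (\<lambda>(i,j). P $$ (i,j))) (mat 2 n (\<lambda>(i,j). P $$ (i,2+j)))
      (0\<^sub>m n 2) (mat n n (\<lambda>(i,j). P $$ (2+i,2+j))))"
    then show "P $$ (i,j) = four_block_mat (mat 2 2 (\<lambda>(i,j). P $$ (i,j))) (mat 2 n (\<lambda>(i,j). P $$ (i,2+j)))
      (0\<^sub>m n 2) (mat n n (\<lambda>(i,j). P $$ (2+i,2+j))) $$ (i,j)"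
      using mult_hom_mat_mult_AB_lower_left_zero[OF assms, of j "i-2"] by auto
  qed (use P in auto)
qed

lemma block_triangular_vec_last:
  assumes "r \<in> carrier_mat 2 2" "X \<in> carrier_mat 2 n" "T \<in> carrier_mat n n" "u \<in> carrier_vec (2+n)"
  shows "vec_last (four_block_mat r X (0\<^sub>m n 2) T *\<^sub>v u) n = T *\<^sub>v vec_last u n"
  using block_triangular_mult_append[OF assms(1-3) vec_first_carrier vec_last_carrier, of u u] assms
  by (simp add: vec_last_append)

lemma block_triangular_mult_mult_AB:
  fixes r :: "'a::comm_ring_1 mat"
  assumes r: "r \<in> carrier_mat 2 2" and X: "X \<in> carrier_mat 2 n" and T: "T \<in> carrier_mat n n"
    and A: "A \<in> carrier_mat n n" and B: "B \<in> carrier_mat n n"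
    and u: "u \<in> carrier_vec (2+n)" and v: "v \<in> carrier_vec (2+n)"
  shows "a < 2 \<Longrightarrow> (four_block_mat r X (0\<^sub>m n 2) T *\<^sub>v mult_AB n A B u v) $ a
      = vec_last u n \<bullet> ((r $$ (a,0) \<cdot>\<^sub>m A + r $$ (a,1) \<cdot>\<^sub>m B) *\<^sub>v vec_last v n)"
    and "2 \<le> k \<Longrightarrow> k < 2+n \<Longrightarrow> (four_block_mat r X (0\<^sub>m n 2) T *\<^sub>v mult_AB n A B u v) $ k = 0"
proof -
  define f where "f = vec_first (mult_AB n A B u v) 2"
  have "X *\<^sub>v 0\<^sub>v n = 0\<^sub>v 2" "T *\<^sub>v 0\<^sub>v n = 0\<^sub>v n" using X T by (auto intro!: eq_vecI)
  then have P_mult: "four_block_mat r X (0\<^sub>m n 2) T *\<^sub>v mult_AB n A B u v = (r *\<^sub>v f) @\<^sub>v 0\<^sub>v n"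
    using block_triangular_mult_append[OF r X T, of f "0\<^sub>v n"] mult_AB_eq_append[of n A B u v] r
    by (simp add: f_def)
  show "(four_block_mat r X (0\<^sub>m n 2) T *\<^sub>v mult_AB n A B u v) $ k = 0" if "2 \<le> k" "k < 2+n"
    using that r by (simp add: P_mult)
  assume a: "a < 2"
  have "(four_block_mat r X (0\<^sub>m n 2) T *\<^sub>v mult_AB n A B u v) $ a = r $$ (a,0) * f $ 0 + r $$ (a,1) * f $ 1"
    using mult_mat_vec_index_2[OF r _ a, of f] r a by (simp add: P_mult f_def)
  also have "\<dots> = r $$ (a,0) * (vec_last u n \<bullet> (A *\<^sub>v vec_last v n)) + r $$ (a,1) * (vec_last u n \<bullet> (B *\<^sub>v vec_last v n))"
    using mult_AB_index[OF u v A B] by (simp add: f_def vec_first_def)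
  also have "\<dots> = vec_last u n \<bullet> ((r $$ (a,0) \<cdot>\<^sub>m A + r $$ (a,1) \<cdot>\<^sub>m B) *\<^sub>v vec_last v n)"
    using bilinear_form_lincomb[OF A B vec_last_carrier vec_last_carrier] ..
  finally show "(four_block_mat r X (0\<^sub>m n 2) T *\<^sub>v mult_AB n A B u v) $ a
      = vec_last u n \<bullet> ((r $$ (a,0) \<cdot>\<^sub>m A + r $$ (a,1) \<cdot>\<^sub>m B) *\<^sub>v vec_last v n)" .
qed

lemma block_triangular_mult_hom_mat_congruence:
  fixes r :: "'a::field mat"
  assumes r: "r \<in> carrier_mat 2 2" and X: "X \<in> carrier_mat 2 n" and T: "T \<in> carrier_mat n n"
    and A: "A \<in> carrier_mat n n" and B: "B \<in> carrier_mat n n"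
    and A': "A' \<in> carrier_mat n n" and B': "B' \<in> carrier_mat n n"
    and hom: "mult_hom_mat (2+n) (mult_AB n A B) (mult_AB n A' B') (four_block_mat r X (0\<^sub>m n 2) T)"
  shows "transpose_mat T * A' * T = r $$ (0,0) \<cdot>\<^sub>m A + r $$ (0,1) \<cdot>\<^sub>m B"
    and "transpose_mat T * B' * T = r $$ (1,0) \<cdot>\<^sub>m A + r $$ (1,1) \<cdot>\<^sub>m B"
proof -
  let ?P = "four_block_mat r X (0\<^sub>m n 2) T"
  have P: "?P \<in> carrier_mat (2+n) (2+n)" using hom unfolding mult_hom_mat_def by simp
  have relation: "transpose_mat T * M' * T = r $$ (a,0) \<cdot>\<^sub>m A + r $$ (a,1) \<cdot>\<^sub>m B"
    if a: "a < 2" and M': "M' \<in> carrier_mat n n"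
      and M'_index: "\<And>u v. u \<in> carrier_vec (2+n) \<Longrightarrow> v \<in> carrier_vec (2+n) \<Longrightarrow>
                 mult_AB n A' B' u v $ a = vec_last u n \<bullet> (M' *\<^sub>v vec_last v n)" for a M'
  proof (rule mat_eq_by_bilinear_form)
    fix x y :: "'a vec" assume xy: "x \<in> carrier_vec n" "y \<in> carrier_vec n"
    define u where "u = 0\<^sub>v 2 @\<^sub>v x"
    define v where "v = 0\<^sub>v 2 @\<^sub>v y"
    have uv: "u \<in> carrier_vec (2+n)" "v \<in> carrier_vec (2+n)" "vec_last u n = x" "vec_last v n = y"
      using xy by (auto simp: u_def v_def vec_last_append)
    have "x \<bullet> ((transpose_mat T * M' * T) *\<^sub>v y) = (T *\<^sub>v x) \<bullet> (M' *\<^sub>v (T *\<^sub>v y))"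
      using bilinear_form_congruence[OF T M' xy] ..
    also have "\<dots> = mult_AB n A' B' (?P *\<^sub>v u) (?P *\<^sub>v v) $ a"
      using M'_index[OF mult_mat_vec_carrier[OF P uv(1)] mult_mat_vec_carrier[OF P uv(2)]] r X T uv
      by (simp add: block_triangular_vec_last)
    also have "\<dots> = (?P *\<^sub>v mult_AB n A B u v) $ a"
      using hom uv unfolding mult_hom_mat_def by simp
    also have "\<dots> = x \<bullet> ((r $$ (a,0) \<cdot>\<^sub>m A + r $$ (a,1) \<cdot>\<^sub>m B) *\<^sub>v y)"
      using block_triangular_mult_mult_AB(1)[OF r X T A B uv(1,2) a] uv by simp
    finally show "x \<bullet> ((transpose_mat T * M' * T) *\<^sub>v y) = x \<bullet> ((r $$ (a,0) \<cdot>\<^sub>m A + r $$ (a,1) \<cdot>\<^sub>m B) *\<^sub>v y)" .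
  qed (use T M' A B in auto)
  show "transpose_mat T * A' * T = r $$ (0,0) \<cdot>\<^sub>m A + r $$ (0,1) \<cdot>\<^sub>m B"
    by (rule relation[OF _ A' mult_AB_index(1)[OF _ _ A' B']]) simp_all
  show "transpose_mat T * B' * T = r $$ (1,0) \<cdot>\<^sub>m A + r $$ (1,1) \<cdot>\<^sub>m B"
    by (rule relation[OF _ B' mult_AB_index(2)[OF _ _ A' B']]) simp_all
qed

lemma block_diagonal_mult_hom_mat:
  fixes r :: "'a::field mat"
  assumes r: "r \<in> carrier_mat 2 2" and T: "T \<in> carrier_mat n n"
    and A: "A \<in> carrier_mat n n" and B: "B \<in> carrier_mat n n"
    and A': "A' \<in> carrier_mat n n" and B': "B' \<in> carrier_mat n n"
    and rel_A': "transpose_mat T * A' * T = r $$ (0,0) \<cdot>\<^sub>m A + r $$ (0,1) \<cdot>\<^sub>m B"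
    and rel_B': "transpose_mat T * B' * T = r $$ (1,0) \<cdot>\<^sub>m A + r $$ (1,1) \<cdot>\<^sub>m B"
  shows "mult_hom_mat (2+n) (mult_AB n A B) (mult_AB n A' B') (four_block_mat r (0\<^sub>m 2 n) (0\<^sub>m n 2) T)"
  unfolding mult_hom_mat_def
proof (intro conjI ballI)
  let ?P = "four_block_mat r (0\<^sub>m 2 n) (0\<^sub>m n 2) T"
  show P: "?P \<in> carrier_mat (2+n) (2+n)" using r T by simp
  fix u v :: "'a vec" assume u: "u \<in> carrier_vec (2+n)" and v: "v \<in> carrier_vec (2+n)"
  have Puv: "?P *\<^sub>v u \<in> carrier_vec (2+n)" "?P *\<^sub>v v \<in> carrier_vec (2+n)"
    "vec_last (?P *\<^sub>v u) n = T *\<^sub>v vec_last u n" "vec_last (?P *\<^sub>v v) n = T *\<^sub>v vec_last v n"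
    using P u v block_triangular_vec_last[OF r zero_carrier_mat T] by auto
  note congr = bilinear_form_congruence[OF T _ vec_last_carrier vec_last_carrier]
  show "?P *\<^sub>v mult_AB n A B u v = mult_AB n A' B' (?P *\<^sub>v u) (?P *\<^sub>v v)"
  proof (rule eq_vecI)
    fix k assume "k < dim_vec (mult_AB n A' B' (?P *\<^sub>v u) (?P *\<^sub>v v))"
    then consider "k = 0" | "k = 1" | "2 \<le> k" "k < 2+n" by fastforce
    then show "(?P *\<^sub>v mult_AB n A B u v) $ k = mult_AB n A' B' (?P *\<^sub>v u) (?P *\<^sub>v v) $ k"
    proof cases
      case 1
      then show ?thesis
        using block_triangular_mult_mult_AB(1)[OF r zero_carrier_mat T A B u v, where a=0] mult_AB_index(1)[OF Puv(1,2) A' B']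
          congr[OF A', of u v] by (simp add: Puv rel_A')
    next
      case 2
      then show ?thesis
        using block_triangular_mult_mult_AB(1)[OF r zero_carrier_mat T A B u v, where a=1] mult_AB_index(2)[OF Puv(1,2) A' B']
          congr[OF B', of u v] by (simp add: Puv rel_B')
    next
      case 3
      then show ?thesis
        using block_triangular_mult_mult_AB(2)[OF r zero_carrier_mat T A B u v] by (simp add: mult_AB_index_ge_2)
    qed
  qed (use r T in simp)
qed

lemma mult_AB_isomorphism_imp_pair_equiv:
  fixes P Q :: "'a::field mat"
  assumes P: "mult_hom_mat (2+n) (mult_AB n A B) (mult_AB n A' B') P"
    and Q: "mult_hom_mat (2+n) (mult_AB n A' B') (mult_AB n A B) Q"
    and PQ: "P * Q = 1\<^sub>m (2+n)" and QP: "Q * P = 1\<^sub>m (2+n)"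
    and A: "A \<in> carrier_mat n n" and B: "B \<in> carrier_mat n n"
    and A': "A' \<in> carrier_mat n n" and B': "B' \<in> carrier_mat n n"
    and indep: "lin_indep_pair n A B" and indep': "lin_indep_pair n A' B'"
  shows "pair_equiv n A B A' B'"
proof -
  obtain r X T where r: "r \<in> carrier_mat 2 2" and X: "X \<in> carrier_mat 2 n" and T: "T \<in> carrier_mat n n"
    and P_blocks: "P = four_block_mat r X (0\<^sub>m n 2) T"
    using mult_hom_mat_mult_AB_block_triangular[OF P A B indep] .
  obtain r' X' T' where r': "r' \<in> carrier_mat 2 2" and X': "X' \<in> carrier_mat 2 n"
    and T': "T' \<in> carrier_mat n n" and Q_blocks: "Q = four_block_mat r' X' (0\<^sub>m n 2) T'"
    using mult_hom_mat_mult_AB_block_triangular[OF Q A' B' indep'] .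
  note rel = block_triangular_mult_hom_mat_congruence[OF r' X' T' A' B' A B Q[unfolded Q_blocks]]
  have rr': "r * r' = 1\<^sub>m 2" and TT': "T * T' = 1\<^sub>m n"
    using block_triangular_inverse_diagonal[OF r X T r' X' T'] PQ by (simp_all add: P_blocks Q_blocks)
  have r'r: "r' * r = 1\<^sub>m 2" and T'T: "T' * T = 1\<^sub>m n"
    using block_triangular_inverse_diagonal[OF r' X' T' r X T] QP by (simp_all add: P_blocks Q_blocks)
  have "r $$ (a,0) \<cdot>\<^sub>m (transpose_mat T' * A * T') + r $$ (a,1) \<cdot>\<^sub>m (transpose_mat T' * B * T')
      = (r * r') $$ (a,0) \<cdot>\<^sub>m A' + (r * r') $$ (a,1) \<cdot>\<^sub>m B'" if "a < 2" for a
    using that r r' A' B' by (simp add: rel smult_mat_lincomb_assoc mult_mat_index_2 del: index_mult_mat)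
  moreover have "1 \<cdot>\<^sub>m A' + 0 \<cdot>\<^sub>m B' = A'" "0 \<cdot>\<^sub>m A' + 1 \<cdot>\<^sub>m B' = B'"
    using A' B' by (auto intro!: eq_matI)
  ultimately have
    "A' = r $$ (0,0) \<cdot>\<^sub>m (transpose_mat T' * A * T') + r $$ (0,1) \<cdot>\<^sub>m (transpose_mat T' * B * T')"
    "B' = r $$ (1,0) \<cdot>\<^sub>m (transpose_mat T' * A * T') + r $$ (1,1) \<cdot>\<^sub>m (transpose_mat T' * B * T')"
    by (simp_all add: rr')
  moreover have "invertible_mat T'" "invertible_mat r"
    using invertible_mat_of_inverse T T' TT' T'T r r' rr' r'r by blast+
  ultimately show ?thesis
    unfolding pair_equiv_def using T' r by blast
qed

lemma pair_equiv_imp_mult_AB_isomorphism: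
  fixes A B :: "'a::field mat"
  assumes equiv: "pair_equiv n A B A' B'" and A: "A \<in> carrier_mat n n" and B: "B \<in> carrier_mat n n"
  obtains P Q where "mult_hom_mat (2+n) (mult_AB n A B) (mult_AB n A' B') P"
    "Q \<in> carrier_mat (2+n) (2+n)" "P * Q = 1\<^sub>m (2+n)" "Q * P = 1\<^sub>m (2+n)"
proof -
  obtain S r where S: "S \<in> carrier_mat n n" "invertible_mat S" and r: "r \<in> carrier_mat 2 2" "invertible_mat r"
    and A': "A' = r $$ (0,0) \<cdot>\<^sub>m (transpose_mat S * A * S) + r $$ (0,1) \<cdot>\<^sub>m (transpose_mat S * B * S)"
    and B': "B' = r $$ (1,0) \<cdot>\<^sub>m (transpose_mat S * A * S) + r $$ (1,1) \<cdot>\<^sub>m (transpose_mat S * B * S)"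
    using equiv unfolding pair_equiv_def by blast
  obtain S' where S': "S' \<in> carrier_mat n n" "S * S' = 1\<^sub>m n" "S' * S = 1\<^sub>m n"
    using invertible_mat_obtain_inverse[OF S(2,1)] .
  obtain r' where r': "r' \<in> carrier_mat 2 2" "r * r' = 1\<^sub>m 2" "r' * r = 1\<^sub>m 2"
    using invertible_mat_obtain_inverse[OF r(2,1)] .
  have "mult_hom_mat (2+n) (mult_AB n A B) (mult_AB n A' B') (four_block_mat r (0\<^sub>m 2 n) (0\<^sub>m n 2) S')"
    using block_diagonal_mult_hom_mat[OF r(1) S'(1) A B]
      congruence_lincomb_cancel[OF S(1) S'(1,2) A B] A B S(1) by (simp add: A' B')
  moreover have "four_block_mat r (0\<^sub>m 2 n) (0\<^sub>m n 2) S' * four_block_mat r' (0\<^sub>m 2 n) (0\<^sub>m n 2) S = 1\<^sub>m (2+n)"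
    by (subst mult_four_block_mat[OF r(1) _ _ S'(1) r'(1) _ _ S(1)])
      (use r r' S' S in \<open>auto simp: right_mult_zero_mat[of _ 2] right_mult_zero_mat[of _ n]
        left_mult_zero_mat[of _ 2] left_mult_zero_mat[of _ n]\<close>)
  moreover have "four_block_mat r' (0\<^sub>m 2 n) (0\<^sub>m n 2) S * four_block_mat r (0\<^sub>m 2 n) (0\<^sub>m n 2) S' = 1\<^sub>m (2+n)"
    by (subst mult_four_block_mat[OF r'(1) _ _ S(1) r(1) _ _ S'(1)])
      (use r r' S' S in \<open>auto simp: right_mult_zero_mat[of _ 2] right_mult_zero_mat[of _ n]
        left_mult_zero_mat[of _ 2] left_mult_zero_mat[of _ n]\<close>)
  ultimately show thesis
    using that[of _ "four_block_mat r' (0\<^sub>m 2 n) (0\<^sub>m n 2) S"] r'(1) S(1) by auto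
qed

section \<open>Coordinates\<close>

locale coordinates = vector_space sc
  for sc :: "'a::field \<Rightarrow> 'r::ab_group_add \<Rightarrow> 'r" +
  fixes \<phi> :: "'r \<Rightarrow> 'a vec" and m :: nat
  assumes bij: "bij_betw \<phi> UNIV (carrier_vec m)"
    and add: "\<phi> (x + y) = \<phi> x + \<phi> y"
    and smult: "\<phi> (sc c x) = c \<cdot>\<^sub>v \<phi> x"
begin

definition coord_basis :: "nat \<Rightarrow> 'r" where
  "coord_basis j = inv_into UNIV \<phi> (unit_vec m j)"

lemma carrier[simp]: "\<phi> x \<in> carrier_vec m"
  using bij by (auto simp: bij_betw_def)

lemma dim_coordinates[simp]: "dim_vec (\<phi> x) = m"
  using carrier[of x] by (simp only: carrier_vec_def mem_Collect_eq)

lemma inj: "\<phi> x = \<phi> y \<Longrightarrow> x = y"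
  using bij by (auto simp: bij_betw_def inj_on_def)

lemma surj: "v \<in> carrier_vec m \<Longrightarrow> \<exists>x. \<phi> x = v"
  using bij by (metis bij_betw_def imageE)

lemma zero: "\<phi> 0 = 0\<^sub>v m"
proof -
  have "\<phi> 0 = 0 \<cdot>\<^sub>v \<phi> 0" using smult[of 0 0] by simp
  also have "\<dots> = 0\<^sub>v m" by (intro eq_vecI) auto
  finally show ?thesis .
qed

lemma index_sum: "i < m \<Longrightarrow> \<phi> (sum f F) $ i = (\<Sum>x\<in>F. \<phi> (f x) $ i)"
  by (induction F rule: infinite_finite_induct) (auto simp: add zero)

lemma coord_basis: "j < m \<Longrightarrow> \<phi> (coord_basis j) = unit_vec m j"
  using bij by (simp add: coord_basis_def bij_betw_def f_inv_into_f)

lemma expansion: "x = (\<Sum>j<m. sc (\<phi> x $ j) (coord_basis j))"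
proof (rule inj, rule eq_vecI)
  fix i assume "i < dim_vec (\<phi> (\<Sum>j<m. sc (\<phi> x $ j) (coord_basis j)))"
  then have i: "i < m" by simp
  then have "\<phi> (\<Sum>j<m. sc (\<phi> x $ j) (coord_basis j)) $ i = (\<Sum>j<m. \<phi> x $ j * (if i = j then 1 else 0))"
    by (simp add: index_sum smult coord_basis)
  also have "\<dots> = \<phi> x $ i" using i by (simp add: if_distrib cong: if_cong)
  finally show "\<phi> x $ i = \<phi> (\<Sum>j<m. sc (\<phi> x $ j) (coord_basis j)) $ i" by simp
qed simp

lemma dim_UNIV: "dim UNIV = m"
proof -
  have inj_basis: "inj_on coord_basis {..<m}"
  proof (rule inj_onI)
    fix i j assume "i \<in> {..<m}" "j \<in> {..<m}" "coord_basis i = coord_basis j"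
    then have "unit_vec m i $ i = (unit_vec m j :: 'a vec) $ i" by (metis coord_basis lessThan_iff)
    then show "i = j" using \<open>i \<in> {..<m}\<close> \<open>j \<in> {..<m}\<close> by (auto split: if_splits)
  qed
  let ?B = "coord_basis ` {..<m}"
  have "independent ?B"
    unfolding independent_explicit_module
  proof (intro allI impI)
    fix t c v assume t: "finite t" "t \<subseteq> ?B" and sum: "(\<Sum>v\<in>t. sc (c v) v) = 0" and "v \<in> t"
    then obtain k where k: "k < m" "v = coord_basis k" by auto
    have "\<phi> w $ k = (if w = v then 1 else 0)" if "w \<in> t" for w
    proof -
      obtain j where "j < m" "w = coord_basis j" using \<open>w \<in> t\<close> t(2) by auto
      then show ?thesis using k inj_basis by (auto simp: coord_basis inj_on_def)
    qed
    then have "\<phi> (\<Sum>v\<in>t. sc (c v) v) $ k = (\<Sum>w\<in>t. c w * (if w = v then 1 else 0))"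
      using k by (simp add: index_sum smult)
    then show "c v = 0" using sum k t(1) \<open>v \<in> t\<close> by (simp add: zero if_distrib cong: if_cong)
  qed
  moreover have "UNIV \<subseteq> span ?B"
  proof
    fix x
    have "x = (\<Sum>j<m. sc (\<phi> x $ j) (coord_basis j))" by (rule expansion)
    also have "\<dots> \<in> span ?B" by (intro span_sum span_scale span_base) auto
    finally show "x \<in> span ?B" .
  qed
  moreover have "card ?B = m" using inj_basis by (simp add: card_image)
  ultimately show ?thesis by (intro dim_unique[of ?B]) auto
qed

end

lemma coordinates_change:
  assumes \<phi>: "coordinates sc \<phi> m" and \<psi>: "coordinates sc \<psi> m'"
  defines "P \<equiv> mat m' m (\<lambda>(i,j). \<psi> (coordinates.coord_basis \<phi> m j) $ i)"
  shows "\<psi> x = P *\<^sub>v \<phi> x"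
proof -
  interpret \<phi>: coordinates sc \<phi> m by fact
  interpret \<psi>: coordinates sc \<psi> m' by fact
  show ?thesis
  proof (rule eq_vecI)
    fix i assume "i < dim_vec (P *\<^sub>v \<phi> x)"
    then have i: "i < m'" by (simp add: P_def)
    have "\<psi> x $ i = \<psi> (\<Sum>j<m. sc (\<phi> x $ j) (\<phi>.coord_basis j)) $ i"
      by (subst \<phi>.expansion[of x]) (rule refl)
    also have "\<dots> = (P *\<^sub>v \<phi> x) $ i"
      using i by (simp add: \<psi>.index_sum \<psi>.smult P_def scalar_prod_def atLeast0LessThan mult.commute)
    finally show "\<psi> x $ i = (P *\<^sub>v \<phi> x) $ i" .
  qed (simp add: P_def)
qed

lemma alg_iso_to_iff_coordinates:
  assumes "vector_space sc"
  shows "alg_iso_to sc mul m M \<longleftrightarrow> (\<exists>\<phi>. coordinates sc \<phi> m \<and> (\<forall>x y. \<phi> (mul x y) = M (\<phi> x) (\<phi> y)))"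
  using assms unfolding alg_iso_to_def coordinates_def coordinates_axioms_def by blast

lemma coordinates_change_mult_hom_mat:
  fixes \<phi> \<psi> :: "'r::ab_group_add \<Rightarrow> 'a::field vec"
  assumes \<phi>: "coordinates sc \<phi> m" and \<psi>: "coordinates sc \<psi> m"
    and \<phi>_mul: "\<And>x y. \<phi> (mul x y) = M (\<phi> x) (\<phi> y)" and \<psi>_mul: "\<And>x y. \<psi> (mul x y) = M' (\<psi> x) (\<psi> y)"
  obtains P where "mult_hom_mat m M M' P" "\<And>x. \<psi> x = P *\<^sub>v \<phi> x"
proof -
  interpret \<phi>: coordinates sc \<phi> m by fact
  define P where "P = mat m m (\<lambda>(i,j). \<psi> (coordinates.coord_basis \<phi> m j) $ i)"
  have P\<psi>: "\<psi> x = P *\<^sub>v \<phi> x" for x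
    unfolding P_def by (rule coordinates_change[OF \<phi> \<psi>])
  have "mult_hom_mat m M M' P"
    unfolding mult_hom_mat_def
  proof (intro conjI ballI)
    show "P \<in> carrier_mat m m" by (simp add: P_def)
    fix u v :: "'a vec" assume "u \<in> carrier_vec m" "v \<in> carrier_vec m"
    then obtain x y where "u = \<phi> x" "v = \<phi> y" using \<phi>.surj by metis
    then show "P *\<^sub>v M u v = M' (P *\<^sub>v u) (P *\<^sub>v v)" by (simp flip: \<phi>_mul P\<psi> add: \<psi>_mul)
  qed
  with P\<psi> show thesis using that by blast
qed

lemma alg_iso_to_imp_mult_hom_mat:
  fixes sc :: "'a::field \<Rightarrow> 'r::ab_group_add \<Rightarrow> 'r"
  assumes vs: "vector_space sc" and iso: "alg_iso_to sc mul m M" and iso': "alg_iso_to sc mul m' M'"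
  obtains P Q where "m' = m" "mult_hom_mat m M M' P" "mult_hom_mat m M' M Q"
    "P * Q = 1\<^sub>m m" "Q * P = 1\<^sub>m m"
proof -
  obtain \<phi> where \<phi>: "coordinates sc \<phi> m" "\<And>x y. \<phi> (mul x y) = M (\<phi> x) (\<phi> y)"
    using iso alg_iso_to_iff_coordinates[OF vs] by metis
  obtain \<psi> where \<psi>: "coordinates sc \<psi> m'" "\<And>x y. \<psi> (mul x y) = M' (\<psi> x) (\<psi> y)"
    using iso' alg_iso_to_iff_coordinates[OF vs] by metis
  have m': "m' = m"
    using coordinates.dim_UNIV[OF \<phi>(1)] coordinates.dim_UNIV[OF \<psi>(1)] by simp
  have \<psi>_m: "coordinates sc \<psi> m" using \<psi>(1) m' by simp
  obtain P where P: "mult_hom_mat m M M' P" and P\<psi>: "\<And>x. \<psi> x = P *\<^sub>v \<phi> x"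
    using coordinates_change_mult_hom_mat[OF \<phi>(1) \<psi>_m, of mul M M'] \<phi>(2) \<psi>(2) by blast
  obtain Q where Q: "mult_hom_mat m M' M Q" and Q\<phi>: "\<And>x. \<phi> x = Q *\<^sub>v \<psi> x"
    using coordinates_change_mult_hom_mat[OF \<psi>_m \<phi>(1), of mul M' M] \<phi>(2) \<psi>(2) by blast
  have PQ: "P \<in> carrier_mat m m" "Q \<in> carrier_mat m m"
    using P Q unfolding mult_hom_mat_def by auto
  have inverse: "R * R' = 1\<^sub>m m"
    if R: "R \<in> carrier_mat m m" "R' \<in> carrier_mat m m" and \<chi>: "coordinates sc \<chi> m"
      and \<chi>\<chi>': "\<And>x. \<chi> x = R *\<^sub>v \<chi>' x" "\<And>x. \<chi>' x = R' *\<^sub>v \<chi> x" for R R' \<chi> \<chi>'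
  proof (rule mat_eq_by_mult_mat_vec)
    fix v :: "'a vec" assume v: "v \<in> carrier_vec m"
    then obtain x where x: "v = \<chi> x" using coordinates.surj[OF \<chi>] by metis
    have "(R * R') *\<^sub>v \<chi> x = R *\<^sub>v (R' *\<^sub>v \<chi> x)"
      using R coordinates.carrier[OF \<chi>] by (rule assoc_mult_mat_vec)
    also have "\<dots> = \<chi> x" by (simp only: \<chi>\<chi>'[symmetric])
    finally show "(R * R') *\<^sub>v v = 1\<^sub>m m *\<^sub>v v"
      using x v by simp
  qed (use R in auto)
  show thesis
    using that[OF m' P Q inverse[OF PQ \<psi>_m P\<psi> Q\<phi>] inverse[OF PQ(2,1) \<phi>(1) Q\<phi> P\<psi>]] .
qed

lemma alg_iso_to_transport:
  fixes P Q :: "'a::field mat"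
  assumes iso: "alg_iso_to sc mul m M" and P: "mult_hom_mat m M M' P"
    and Q: "Q \<in> carrier_mat m m" and PQ: "P * Q = 1\<^sub>m m" and QP: "Q * P = 1\<^sub>m m"
  shows "alg_iso_to sc mul m M'"
proof -
  obtain \<phi> where bij: "bij_betw \<phi> UNIV (carrier_vec m)"
    and add: "\<And>x y. \<phi> (x + y) = \<phi> x + \<phi> y" and smult: "\<And>c x. \<phi> (sc c x) = c \<cdot>\<^sub>v \<phi> x"
    and mul: "\<And>x y. \<phi> (mul x y) = M (\<phi> x) (\<phi> y)"
    using iso unfolding alg_iso_to_def by blast
  have Pc: "P \<in> carrier_mat m m"
    and P_mul: "\<And>u v. u \<in> carrier_vec m \<Longrightarrow> v \<in> carrier_vec m \<Longrightarrow> P *\<^sub>v M u v = M' (P *\<^sub>v u) (P *\<^sub>v v)"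
    using P unfolding mult_hom_mat_def by auto
  have \<phi>_carrier: "\<phi> x \<in> carrier_vec m" for x using bij by (auto simp: bij_betw_def)
  have "bij_betw (\<lambda>u. P *\<^sub>v u) (carrier_vec m) (carrier_vec m)"
    by (rule bij_betw_byWitness[where f' = "\<lambda>u. Q *\<^sub>v u"])
      (use Pc Q PQ QP in \<open>auto simp: assoc_mult_mat_vec[symmetric, of _ m m _ m]\<close>)
  then have "bij_betw (\<lambda>x. P *\<^sub>v \<phi> x) UNIV (carrier_vec m)"
    using bij_betw_trans[OF bij] by (simp add: comp_def)
  moreover have "P *\<^sub>v \<phi> (x + y) = P *\<^sub>v \<phi> x + P *\<^sub>v \<phi> y" for x y
    using Pc \<phi>_carrier by (simp add: add mult_add_distrib_mat_vec[OF Pc])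
  moreover have "P *\<^sub>v \<phi> (sc c x) = c \<cdot>\<^sub>v (P *\<^sub>v \<phi> x)" for c x
    using Pc \<phi>_carrier by (simp add: smult mult_mat_vec[OF Pc])
  moreover have "P *\<^sub>v \<phi> (mul x y) = M' (P *\<^sub>v \<phi> x) (P *\<^sub>v \<phi> y)" for x y
    using \<phi>_carrier by (simp add: mul P_mul)
  ultimately show ?thesis
    unfolding alg_iso_to_def by blast
qed

lemma alg_iso_to_mult_AB_iff_pair_equiv:
  fixes sc :: "'a::field \<Rightarrow> 'r::ab_group_add \<Rightarrow> 'r"
  assumes vs: "vector_space sc" and iso: "alg_iso_to sc mul (2+n) (mult_AB n A B)"
    and A: "A \<in> carrier_mat n n" and B: "B \<in> carrier_mat n n" and indep: "lin_indep_pair n A B"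
    and A': "A' \<in> carrier_mat n' n'" and B': "B' \<in> carrier_mat n' n'" and indep': "lin_indep_pair n' A' B'"
  shows "alg_iso_to sc mul (2+n') (mult_AB n' A' B') \<longleftrightarrow> n' = n \<and> pair_equiv n A B A' B'"
proof
  assume iso': "alg_iso_to sc mul (2+n') (mult_AB n' A' B')"
  obtain P Q where "2 + n' = 2 + n" "mult_hom_mat (2+n) (mult_AB n A B) (mult_AB n' A' B') P"
    "mult_hom_mat (2+n) (mult_AB n' A' B') (mult_AB n A B) Q" "P * Q = 1\<^sub>m (2+n)" "Q * P = 1\<^sub>m (2+n)"
    using alg_iso_to_imp_mult_hom_mat[OF vs iso iso'] by blast
  then show "n' = n \<and> pair_equiv n A B A' B'"
    using mult_AB_isomorphism_imp_pair_equiv A B A' B' indep indep' by auto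
next
  assume "n' = n \<and> pair_equiv n A B A' B'"
  then obtain P Q where "n' = n" "mult_hom_mat (2+n) (mult_AB n A B) (mult_AB n A' B') P"
    "Q \<in> carrier_mat (2+n) (2+n)" "P * Q = 1\<^sub>m (2+n)" "Q * P = 1\<^sub>m (2+n)"
    using pair_equiv_imp_mult_AB_isomorphism[OF _ A B] by metis
  then show "alg_iso_to sc mul (2+n') (mult_AB n' A' B')"
    using alg_iso_to_transport[OF iso] by blast
qed

lemma (in finite_dimensional_vector_space) coordinates_representation:
  assumes indep: "independent (set bs)" and spans: "span (set bs) = UNIV" and dist: "distinct bs"
  shows "coordinates scale (\<lambda>x. vec (length bs) (\<lambda>i. representation (set bs) x (bs ! i))) (length bs)"
proof -
  define \<phi> where "\<phi> x = vec (length bs) (\<lambda>i. representation (set bs) x (bs ! i))" for x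
  have rep_add: "representation (set bs) (x + y) = (\<lambda>b. representation (set bs) x b + representation (set bs) y b)" for x y
    using representation_add[OF indep] spans by auto
  have rep_scale: "representation (set bs) (scale c x) = (\<lambda>b. c * representation (set bs) x b)" for c x
    using representation_scale[OF indep] spans by auto
  have add: "\<phi> (x + y) = \<phi> x + \<phi> y" for x y
    by (intro eq_vecI) (auto simp: \<phi>_def rep_add)
  have smult: "\<phi> (scale c x) = c \<cdot>\<^sub>v \<phi> x" for c x
    by (intro eq_vecI) (auto simp: \<phi>_def rep_scale)
  have index_sum: "\<phi> (sum f F) $ k = (\<Sum>x\<in>F. \<phi> (f x) $ k)" if "k < length bs" for f :: "nat \<Rightarrow> 'b" and F k
    using that by (induction F rule: infinite_finite_induct) (auto simp: \<phi>_def rep_add representation_zero)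
  have \<phi>_bs: "\<phi> (bs ! j) = unit_vec (length bs) j" if "j < length bs" for j
    using that dist
    by (intro eq_vecI) (auto simp: \<phi>_def representation_basis[OF indep nth_mem[OF that]] nth_eq_iff_index_eq)
  have "inj \<phi>"
  proof (rule injI)
    fix x y assume "\<phi> x = \<phi> y"
    have "representation (set bs) x b = representation (set bs) y b" if "b \<in> set bs" for b
    proof -
      from that obtain i where "i < length bs" "b = bs ! i" by (auto simp: in_set_conv_nth)
      then show ?thesis using arg_cong[OF \<open>\<phi> x = \<phi> y\<close>, of "\<lambda>v. v $ i"] by (simp add: \<phi>_def)
    qed
    then have "(\<Sum>b\<in>set bs. scale (representation (set bs) x b) b) = (\<Sum>b\<in>set bs. scale (representation (set bs) y b) b)"
      by (intro sum.cong) simp_all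
    moreover have "(\<Sum>b\<in>set bs. scale (representation (set bs) z b) b) = z" for z
      using sum_representation_eq[OF indep _ finite_set order_refl] spans by blast
    ultimately show "x = y" by metis
  qed
  moreover have "\<phi> (\<Sum>i<length bs. scale (v $ i) (bs ! i)) = v" if "v \<in> carrier_vec (length bs)" for v
  proof (rule eq_vecI)
    fix k assume "k < dim_vec v"
    then have k: "k < length bs" using that by simp
    then have "\<phi> (\<Sum>i<length bs. scale (v $ i) (bs ! i)) $ k = (\<Sum>i<length bs. v $ i * unit_vec (length bs) i $ k)"
      by (simp add: index_sum smult \<phi>_bs)
    also have "\<dots> = v $ k" using k by (simp add: if_distrib cong: if_cong)
    finally show "\<phi> (\<Sum>i<length bs. scale (v $ i) (bs ! i)) $ k = v $ k" .
  qed (use that in \<open>simp add: \<phi>_def\<close>)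
  then have "range \<phi> = carrier_vec (length bs)"
    by (auto simp: \<phi>_def intro: range_eqI[OF sym])
  ultimately show ?thesis
    unfolding \<phi>_def[symmetric]
    by (intro coordinates.intro coordinates_axioms.intro vector_space_axioms)
      (auto simp: bij_betw_def add smult)
qed

lemma (in finite_dimensional_vector_space) exists_adapted_coordinates:
  assumes "subspace W"
  obtains n \<phi> where "coordinates scale \<phi> (dim W + n)"
    "\<And>x. x \<in> W \<longleftrightarrow> (\<forall>k. dim W \<le> k \<and> k < dim W + n \<longrightarrow> \<phi> x $ k = 0)"
proof -
  obtain Bw where Bw: "Bw \<subseteq> W" "independent Bw" "W \<subseteq> span Bw" "card Bw = dim W"
    by (rule basis_exists)
  define E where "E = extend_basis Bw"
  have E: "Bw \<subseteq> E" "independent E" "span E = UNIV"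
    unfolding E_def using extend_basis_superset independent_extend_basis span_extend_basis Bw(2) by auto
  have "finite E" using E(2) finiteI_independent by blast
  then obtain ws rs where ws: "set ws = Bw" "distinct ws" and rs: "set rs = E - Bw" "distinct rs"
    using finite_distinct_list finite_subset[OF E(1)] finite_Diff by meson
  define bs where "bs = ws @ rs"
  define n where "n = length rs"
  have len: "length bs = dim W + n"
    using distinct_card[OF ws(2)] ws(1) Bw(4) by (simp add: bs_def n_def)
  have bs: "distinct bs" "set bs = E"
    using ws rs E(1) by (auto simp: bs_def)
  have bs_low: "bs ! k \<in> Bw \<longleftrightarrow> k < dim W" if "k < dim W + n" for k
    using that len bs ws rs distinct_card[OF ws(2)] Bw(4)
    by (auto simp: bs_def nth_append nth_mem)
  define \<phi> where "\<phi> = (\<lambda>x. vec (dim W + n) (\<lambda>i. representation E x (bs ! i)))"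
  have "coordinates scale \<phi> (dim W + n)"
    using coordinates_representation[of bs] E(2,3) bs by (simp add: \<phi>_def len)
  moreover have "x \<in> W \<longleftrightarrow> (\<forall>k. dim W \<le> k \<and> k < dim W + n \<longrightarrow> \<phi> x $ k = 0)" for x
  proof
    assume "x \<in> W"
    then have "representation E x = representation Bw x"
      using representation_extend[OF E(2) _ E(1)] Bw(3) by blast
    then show "\<forall>k. dim W \<le> k \<and> k < dim W + n \<longrightarrow> \<phi> x $ k = 0"
      using bs_low representation_ne_zero by (fastforce simp: \<phi>_def)
  next
    assume tail: "\<forall>k. dim W \<le> k \<and> k < dim W + n \<longrightarrow> \<phi> x $ k = 0"
    have "representation E x b = 0" if "b \<in> E - Bw" for b
    proof -
      from that bs(2) obtain k where "k < length bs" "b = bs ! k" by (auto simp: in_set_conv_nth)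
      then show ?thesis using tail bs_low that len by (auto simp: \<phi>_def)
    qed
    then have "x = (\<Sum>b\<in>Bw. scale (representation E x b) b)"
      using sum_representation_eq[OF E(2) _ \<open>finite E\<close> order_refl, of x] E(1,3) \<open>finite E\<close>
      by (simp add: sum.mono_neutral_right)
    also have "\<dots> \<in> span Bw" by (intro span_sum span_scale span_base)
    finally show "x \<in> W" using span_minimal[OF Bw(1) assms] by blast
  qed
  ultimately show thesis using that by blast
qed

section \<open>Algebras with zero cube\<close>

locale cube_zero_algebra = finite_dimensional_vector_space sc Bs
  for sc :: "'a::field \<Rightarrow> 'r::ab_group_add \<Rightarrow> 'r" and Bs :: "'r set" +
  fixes mul :: "'r \<Rightarrow> 'r \<Rightarrow> 'r"
  assumes mul_add_left: "mul (x + y) z = mul x z + mul y z"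
    and mul_add_right: "mul x (y + z) = mul x y + mul x z"
    and mul_scale_left: "mul (sc c x) y = sc c (mul x y)"
    and mul_scale_right: "mul x (sc c y) = sc c (mul x y)"
    and mul_assoc: "mul (mul x y) z = mul x (mul y z)"
    and cube_zero: "alg_cube sc mul = {0}"
begin

lemma mul_zero_left[simp]: "mul 0 y = 0"
  using mul_add_left[of 0 0 y] by simp

lemma mul_zero_right[simp]: "mul y 0 = 0"
  using mul_add_right[of y 0 0] by simp

lemma mul_sum_left: "mul (sum f F) y = (\<Sum>x\<in>F. mul (f x) y)"
  by (induction F rule: infinite_finite_induct) (auto simp: mul_add_left)

lemma mul_sum_right: "mul y (sum f F) = (\<Sum>x\<in>F. mul y (f x))"
  by (induction F rule: infinite_finite_induct) (auto simp: mul_add_right)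

lemma mul_in_alg_sq: "mul x y \<in> alg_sq sc mul"
  unfolding alg_sq_def by (rule span_base) blast

lemma triple_product_zero: "mul (mul x y) z = 0"
proof -
  have "mul (mul x y) z \<in> span {mul (mul u v) w | u v w. True}" by (rule span_base) blast
  then show ?thesis using cube_zero by (simp add: alg_cube_def)
qed

lemma alg_sq_annihilates_left:
  assumes "w \<in> alg_sq sc mul"
  shows "mul w y = 0"
  using assms unfolding alg_sq_def
proof (induction rule: span_induct_alt)
  case (step c x z)
  then show ?case by (auto simp: mul_add_left mul_scale_left triple_product_zero)
qed simp

lemma alg_sq_annihilates_right:
  assumes "w \<in> alg_sq sc mul"
  shows "mul y w = 0"
  using assms unfolding alg_sq_def
proof (induction rule: span_induct_alt)
  case (step c x z)
  then obtain u v where "x = mul u v" by blast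
  with step show ?case
    by (simp add: mul_add_right mul_scale_right triple_product_zero flip: mul_assoc)
qed simp

end

lemma fd_algebra_imp_cube_zero_algebra:
  assumes "fd_algebra sc mul" "alg_cube sc mul = {0}"
  obtains Bs where "cube_zero_algebra sc Bs mul"
proof -
  from assms(1) obtain Bs where "finite_dimensional_vector_space sc Bs"
    unfolding fd_algebra_def by blast
  with assms show thesis
    by (intro that[of Bs] cube_zero_algebra.intro cube_zero_algebra_axioms.intro) (auto simp: fd_algebra_def)
qed

locale adapted_coordinates = cube_zero_algebra sc Bs mul + coordinates sc \<phi> "2 + n"
  for sc :: "'a::field \<Rightarrow> 'r::ab_group_add \<Rightarrow> 'r" and Bs mul \<phi> and n :: nat +
  assumes alg_sq_iff: "x \<in> alg_sq sc mul \<longleftrightarrow> (\<forall>k. 2 \<le> k \<and> k < 2+n \<longrightarrow> \<phi> x $ k = 0)"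
begin

definition structure_mat :: "nat \<Rightarrow> 'a mat" where
  "structure_mat a = mat n n (\<lambda>(i,j). \<phi> (mul (coord_basis (2+i)) (coord_basis (2+j))) $ a)"

lemma structure_mat_carrier[simp]: "structure_mat a \<in> carrier_mat n n"
  by (simp add: structure_mat_def)

lemma coord_basis_in_alg_sq: "a < 2 \<Longrightarrow> coord_basis a \<in> alg_sq sc mul"
  by (simp add: alg_sq_iff coord_basis)

text \<open>The first two basis vectors lie in \<open>R\<^sup>2\<close>, which annihilates \<open>R\<close>, so only the last \<open>n\<close>
  coordinates of the factors contribute to a product.\<close>

lemma mul_index_expansion:
  assumes "k < 2+n"
  shows "\<phi> (mul x y) $ k
    = (\<Sum>i<n. \<Sum>j<n. \<phi> x $ (2+i) * \<phi> y $ (2+j) * \<phi> (mul (coord_basis (2+i)) (coord_basis (2+j))) $ k)"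
proof -
  have "\<phi> (mul x y) = \<phi> (mul (\<Sum>i<2+n. sc (\<phi> x $ i) (coord_basis i)) (\<Sum>j<2+n. sc (\<phi> y $ j) (coord_basis j)))"
    by (rule arg_cong2[where f = "\<lambda>a b. \<phi> (mul a b)"]; rule expansion)
  also have "\<dots> = \<phi> (\<Sum>i<2+n. \<Sum>j<2+n. sc (\<phi> x $ i * \<phi> y $ j) (mul (coord_basis i) (coord_basis j)))"
    by (simp only: mul_sum_left, simp only: mul_sum_right) (simp add: mul_scale_left mul_scale_right mult.commute)
  finally have "\<phi> (mul x y) $ k
      = (\<Sum>i<2+n. \<Sum>j<2+n. \<phi> x $ i * \<phi> y $ j * \<phi> (mul (coord_basis i) (coord_basis j)) $ k)"
    using assms by (simp add: index_sum smult)
  also have "\<dots> = (\<Sum>i<n. \<Sum>j<n. \<phi> x $ (2+i) * \<phi> y $ (2+j) * \<phi> (mul (coord_basis (2+i)) (coord_basis (2+j))) $ k)"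
    using assms coord_basis_in_alg_sq alg_sq_annihilates_left alg_sq_annihilates_right
    by (simp add: sum_lessThan_2_plus zero)
  finally show ?thesis .
qed

lemma mul_index_structure_mat:
  assumes "a < 2"
  shows "\<phi> (mul x y) $ a = vec_last (\<phi> x) n \<bullet> (structure_mat a *\<^sub>v vec_last (\<phi> y) n)"
proof -
  have "vec_last (\<phi> x) n \<bullet> (structure_mat a *\<^sub>v vec_last (\<phi> y) n)
      = (\<Sum>i<n. \<Sum>j<n. vec_last (\<phi> x) n $ i * structure_mat a $$ (i,j) * vec_last (\<phi> y) n $ j)"
    by (rule scalar_prod_mult_mat_vec_sum) auto
  also have "\<dots> = (\<Sum>i<n. \<Sum>j<n. \<phi> x $ (2+i) * \<phi> y $ (2+j) * \<phi> (mul (coord_basis (2+i)) (coord_basis (2+j))) $ a)"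
    by (intro sum.cong refl) (simp add: vec_last_def structure_mat_def mult_ac)
  also have "\<dots> = \<phi> (mul x y) $ a" using mul_index_expansion[of a x y] assms by simp
  finally show ?thesis by simp
qed

lemma mul_eq_mult_AB: "\<phi> (mul x y) = mult_AB n (structure_mat 0) (structure_mat 1) (\<phi> x) (\<phi> y)"
proof (rule eq_vecI)
  fix k assume "k < dim_vec (mult_AB n (structure_mat 0) (structure_mat 1) (\<phi> x) (\<phi> y))"
  then consider "k = 0" | "k = 1" | "2 \<le> k" "k < 2+n" by fastforce
  then show "\<phi> (mul x y) $ k = mult_AB n (structure_mat 0) (structure_mat 1) (\<phi> x) (\<phi> y) $ k"
  proof cases
    case 1
    then show ?thesis
      using mult_AB_index(1)[OF carrier carrier structure_mat_carrier structure_mat_carrier]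
        mul_index_structure_mat[of 0] by simp
  next
    case 2
    then show ?thesis
      using mult_AB_index(2)[OF carrier carrier structure_mat_carrier structure_mat_carrier]
        mul_index_structure_mat[of 1] by simp
  next
    case 3
    then show ?thesis using alg_sq_iff mul_in_alg_sq by (simp add: mult_AB_index_ge_2)
  qed
qed simp

lemma structure_mat_lin_indep: "lin_indep_pair n (structure_mat 0) (structure_mat 1)"
  unfolding lin_indep_pair_def
proof (intro allI impI)
  fix a b assume ab: "a \<cdot>\<^sub>m structure_mat 0 + b \<cdot>\<^sub>m structure_mat 1 = 0\<^sub>m n n"
  have on_products: "a * \<phi> (mul x y) $ 0 + b * \<phi> (mul x y) $ 1 = 0" for x y
  proof -
    have "a * \<phi> (mul x y) $ 0 + b * \<phi> (mul x y) $ 1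
        = vec_last (\<phi> x) n \<bullet> ((a \<cdot>\<^sub>m structure_mat 0 + b \<cdot>\<^sub>m structure_mat 1) *\<^sub>v vec_last (\<phi> y) n)"
      using mul_index_structure_mat[of 0 x y] mul_index_structure_mat[of 1 x y]
      by (simp add: bilinear_form_lincomb[of _ n])
    also have "\<dots> = 0" by (subst ab) (simp add: scalar_prod_mult_mat_vec_sum[of _ n])
    finally show ?thesis .
  qed
  have "a * \<phi> w $ 0 + b * \<phi> w $ 1 = 0" if "w \<in> alg_sq sc mul" for w
    using that unfolding alg_sq_def
  proof (induction rule: span_induct_alt)
    case base
    then show ?case by (simp add: zero)
  next
    case (step c x z)
    then obtain u v where "x = mul u v" by blast
    have "a * \<phi> (sc c x + z) $ 0 + b * \<phi> (sc c x + z) $ 1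
        = c * (a * \<phi> x $ 0 + b * \<phi> x $ 1) + (a * \<phi> z $ 0 + b * \<phi> z $ 1)"
      by (simp add: add smult algebra_simps)
    then show ?case using step.IH on_products \<open>x = mul u v\<close> by simp
  qed
  from this[OF coord_basis_in_alg_sq[of 0]] this[OF coord_basis_in_alg_sq[of 1]] show "a = 0 \<and> b = 0"
    by (simp add: coord_basis)
qed

end

lemma (in cube_zero_algebra) exists_mult_AB_model:
  assumes "dim (alg_sq sc mul) = 2"
  obtains n A B where "A \<in> carrier_mat n n" "B \<in> carrier_mat n n" "lin_indep_pair n A B"
    "alg_iso_to sc mul (2+n) (mult_AB n A B)"
proof -
  have "subspace (alg_sq sc mul)" unfolding alg_sq_def by (rule subspace_span)
  then obtain n \<phi> where "coordinates sc \<phi> (2+n)"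
    and "\<And>x. x \<in> alg_sq sc mul \<longleftrightarrow> (\<forall>k. 2 \<le> k \<and> k < 2+n \<longrightarrow> \<phi> x $ k = 0)"
    using exists_adapted_coordinates assms by metis
  then interpret adapted_coordinates sc Bs mul \<phi> n
    by (intro adapted_coordinates.intro adapted_coordinates_axioms.intro cube_zero_algebra_axioms) auto
  have "alg_iso_to sc mul (2+n) (mult_AB n (structure_mat 0) (structure_mat 1))"
    using coordinates_axioms mul_eq_mult_AB alg_iso_to_iff_coordinates[OF vector_space_axioms] by blast
  then show thesis by (rule that[OF structure_mat_carrier structure_mat_carrier structure_mat_lin_indep])
qed

theorem lemma3p3:
  fixes sc :: "'a::field \<Rightarrow> 'r::ab_group_add \<Rightarrow> 'r"
    and mul :: "'r \<Rightarrow> 'r \<Rightarrow> 'r"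
  assumes "alg_closed TYPE('a)"
    and "(2::'a) \<noteq> 0"
    and "fd_algebra sc mul"
    and "alg_cube sc mul = {0}"
    and "vector_space.dim sc (alg_sq sc mul) = 2"
  shows "\<exists>n A B. n \<ge> 2 \<and> A \<in> carrier_mat n n \<and> B \<in> carrier_mat n n \<and>
           lin_indep_pair n A B \<and> alg_iso_to sc mul (2 + n) (mult_AB n A B) \<and>
           (\<forall>n' A' B'. A' \<in> carrier_mat n' n' \<and> B' \<in> carrier_mat n' n' \<and> lin_indep_pair n' A' B' \<longrightarrow>
              (alg_iso_to sc mul (2 + n') (mult_AB n' A' B') \<longleftrightarrow>
               n' = n \<and> pair_equiv n A B A' B'))"
proof -
  obtain Bs where "cube_zero_algebra sc Bs mul"
    using fd_algebra_imp_cube_zero_algebra[OF assms(3,4)] .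
  then interpret cube_zero_algebra sc Bs mul .
  obtain n A B where A: "A \<in> carrier_mat n n" and B: "B \<in> carrier_mat n n"
    and indep: "lin_indep_pair n A B" and iso: "alg_iso_to sc mul (2+n) (mult_AB n A B)"
    using exists_mult_AB_model[OF assms(5)] .
  show ?thesis
    using lin_indep_pair_dim_ge_2[OF A B indep] A B indep iso
      alg_iso_to_mult_AB_iff_pair_equiv[OF vector_space_axioms iso A B indep]
    by blast
qed

end
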